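(* Let $m,k\in\mathbb{N}$. Then \[ {}_3F_2\left[\begin{array}{r} -2m-1,\ 1+k,\ 1+k;\\ -2m-1-k,\ -2m-1-k;\end{array}1\right]_{2m+1}=0. \]
   Context: $\mathbb{N}=\{1,2,3,\dots\}$. For $a\in\mathbb{C}$ and $n\in\mathbb{N}_0$, $(a)_0=1$ and $(a)_n=a(a+1)\cdots(a+n-1)$. For $N\in\mathbb{N}_0$, ${}_3F_2\left[\begin{array}{r} a_1,a_2,a_3;\\ b_1,b_2;\end{array}z\right]_N=\sum_{n=0}^{N}\frac{(a_1)_n(a_2)_n(a_3)_n}{(b_1)_n(b_2)_n}\frac{z^n}{n!}$ (the sum of the first $N+1$ terms), defined whenever $(b_1)_n(b_2)_n\neq0$ for $0\le n\le N$. *)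

theory Defs
  imports Complex_Main
begin

definition hyp3F2_trunc :: "complex \<Rightarrow> complex \<Rightarrow> complex \<Rightarrow> complex \<Rightarrow> complex \<Rightarrow> complex \<Rightarrow> nat \<Rightarrow> complex" where
  "hyp3F2_trunc a1 a2 a3 b1 b2 z N =
     (\<Sum>n=0..N. (pochhammer a1 n * pochhammer a2 n * pochhammer a3 n)
                / (pochhammer b1 n * pochhammer b2 n) * z ^ n / of_nat (fact n))"

end

theory Submission
  imports Defs
begin

(* Write N = 2m + 1. Since (-N)_n / n! = (-1)^n binom(N, n) and
   (k+1)_n / (-N-k)_n = (-1)^n (k+n)! (N+k-n)! / (k! (N+k)!), the n-th term of the sum is
   (-1)^n binom(N, n) times a square that is invariant under the reflection n -> N - n.
   As N is odd, the reflection changes the sign (-1)^n, so the terms cancel in pairs. *)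

lemma alternating_binomial_sum_eq_zero_if_symmetric:
  fixes f :: "nat \<Rightarrow> 'a::{idom, ring_char_0}"
  assumes "odd N" and symmetric: "\<And>n. n \<le> N \<Longrightarrow> f (N - n) = f n"
  shows "(\<Sum>n=0..N. (- 1) ^ n * of_nat (N choose n) * f n) = 0"
proof -
  let ?S = "\<Sum>n=0..N. (- 1) ^ n * of_nat (N choose n) * f n"
  have "?S = (\<Sum>n=0..N. (- 1) ^ (N - n) * of_nat (N choose (N - n)) * f (N - n))"
    using sum.atLeastAtMost_rev[of _ 0 N] by simp
  also have "\<dots> = (\<Sum>n=0..N. - ((- 1) ^ n * of_nat (N choose n) * f n))"
  proof (intro sum.cong refl)
    fix n assume "n \<in> {0..N}"
    then have "n \<le> N" by simp
    then have "(- 1 :: 'a) ^ (N - n) = - ((- 1) ^ n)"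
      using \<open>odd N\<close> by (auto simp: minus_one_power_iff)
    then show "(- 1) ^ (N - n) * of_nat (N choose (N - n)) * f (N - n)
      = - ((- 1) ^ n * of_nat (N choose n) * f n)"
      using symmetric[OF \<open>n \<le> N\<close>] binomial_symmetric[OF \<open>n \<le> N\<close>] by simp
  qed
  finally have "?S = - ?S"
    by (simp add: sum_negf)
  then show ?thesis
    by simp
qed

lemma fact_add_eq_fact_mult_pochhammer:
  "fact (a + n) = (fact a * pochhammer (of_nat a + 1) n :: 'a::{semiring_char_0, comm_semiring_1})"
  using pochhammer_product'[of 1 a n] by (simp add: pochhammer_fact add.commute)

lemma pochhammer_of_nat_plus_one:
  "pochhammer (of_nat k + 1 :: 'a::field_char_0) n = fact (k + n) / fact k"
  by (simp add: fact_add_eq_fact_mult_pochhammer)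

lemma pochhammer_minus_of_nat:
  assumes "n \<le> M"
  shows "pochhammer (- of_nat M :: 'a::field_char_0) n = (- 1) ^ n * fact M / fact (M - n)"
proof -
  have "fact M = (fact (M - n) * pochhammer (of_nat M - of_nat n + 1) n :: 'a)"
    using fact_add_eq_fact_mult_pochhammer[of "M - n" n, where 'a = 'a] assms
    by (simp add: of_nat_diff)
  then show ?thesis
    by (simp add: pochhammer_minus)
qed

lemma pochhammer_minus_of_nat_div_fact:
  "pochhammer (- of_nat N :: 'a::field_char_0) n / fact n = (- 1) ^ n * of_nat (N choose n)"
  by (simp add: binomial_gbinomial gbinomial_pochhammer)

lemma pochhammer_of_nat_plus_one_div_pochhammer_minus_of_nat:
  assumes "n \<le> M"
  shows "pochhammer (of_nat k + 1 :: 'a::field_char_0) n / pochhammer (- of_nat M) n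
    = (- 1) ^ n * (fact (k + n) * fact (M - n) / (fact k * fact M))"
  unfolding pochhammer_of_nat_plus_one pochhammer_minus_of_nat[OF assms]
  by (simp add: field_simps)

lemma hyp3F2_trunc_minus_of_nat_eq_alternating_binomial_sum:
  "hyp3F2_trunc (- of_nat N) (of_nat k + 1) (of_nat k + 1) (- of_nat (N + k)) (- of_nat (N + k)) 1 N
    = (\<Sum>n=0..N. (- 1) ^ n * of_nat (N choose n)
         * (fact (k + n) * fact (N + k - n) / (fact k * fact (N + k))) ^ 2)"
proof -
  have summand: "pochhammer (- of_nat N :: complex) n
      * pochhammer (of_nat k + 1) n * pochhammer (of_nat k + 1) n
      / (pochhammer (- of_nat (N + k)) n * pochhammer (- of_nat (N + k)) n) * 1 ^ n
      / of_nat (fact n)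
    = (- 1) ^ n * of_nat (N choose n)
      * (fact (k + n) * fact (N + k - n) / (fact k * fact (N + k))) ^ 2"
    if "n \<le> N" for n
  proof -
    have "pochhammer (- of_nat N) n * pochhammer (of_nat k + 1) n * pochhammer (of_nat k + 1) n
        / (pochhammer (- of_nat (N + k)) n * pochhammer (- of_nat (N + k)) n) * 1 ^ n
        / of_nat (fact n)
      = pochhammer (- of_nat N :: complex) n / fact n
        * (pochhammer (of_nat k + 1) n / pochhammer (- of_nat (N + k)) n) ^ 2"
      by (simp add: divide_inverse power2_eq_square mult_ac del: of_nat_add)
    also have "\<dots> = (- 1) ^ n * of_nat (N choose n)
        * (fact (k + n) * fact (N + k - n) / (fact k * fact (N + k))) ^ 2"
      using that by (simp add: pochhammer_minus_of_nat_div_fact power_mult_distrib power_divide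
          pochhammer_of_nat_plus_one_div_pochhammer_minus_of_nat[of n "N + k"]
          flip: power_mult del: of_nat_add)
    finally show ?thesis .
  qed
  show ?thesis
    unfolding hyp3F2_trunc_def by (intro sum.cong refl summand) simp
qed

theorem mainTheorem13:
  fixes m k :: nat
  assumes "m \<ge> 1" and "k \<ge> 1"
  shows "hyp3F2_trunc (- 2 * of_nat m - 1) (1 + of_nat k) (1 + of_nat k)
           (- 2 * of_nat m - 1 - of_nat k) (- 2 * of_nat m - 1 - of_nat k) 1 (2 * m + 1) = 0"
proof -
  define N where "N = 2 * m + 1"
  have arguments: "(- 2 * of_nat m - 1 :: complex) = - of_nat N"
    "(- of_nat N - of_nat k :: complex) = - of_nat (N + k)"
    "(1 + of_nat k :: complex) = of_nat k + 1"
    by (simp_all add: N_def)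
  have "(\<Sum>n=0..N. (- 1) ^ n * of_nat (N choose n)
      * (fact (k + n) * fact (N + k - n) / (fact k * fact (N + k))) ^ 2 :: complex) = 0"
  proof (rule alternating_binomial_sum_eq_zero_if_symmetric)
    show "odd N" by (simp add: N_def)
    fix n assume "n \<le> N"
    then have "k + (N - n) = N + k - n" and "N + k - (N - n) = k + n" by simp_all
    then show "(fact (k + (N - n)) * fact (N + k - (N - n)) / (fact k * fact (N + k))) ^ 2
      = ((fact (k + n) * fact (N + k - n) / (fact k * fact (N + k))) ^ 2 :: complex)"
      by (simp add: mult.commute)
  qed
  then show ?thesis
    unfolding arguments N_def [symmetric] hyp3F2_trunc_minus_of_nat_eq_alternating_binomial_sum .
qed

end
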